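(* Let $m,n\geq 0$ be integers. Then \[ \sum_{k=1}^{n}\frac{(-1)^k q^{\binom{k+1}{2}}}{(q;q)_k (q;q)_{n-k}(q^k;q)_{m+1}} -\sum_{k=1}^{m}\frac{(-1)^k q^{\binom{k+1}{2}}}{(q;q)_k (q;q)_{m-k}(q^k;q)_{n+1}} =\frac{1}{(q;q)_{m}(q;q)_{n}}\left(\sum_{k=1}^m\frac{q^k}{1-q^k}-\sum_{k=1}^n\frac{q^k}{1-q^k}\right). \]
   Context: For $N\geq 0$, $(x;q)_N=(1-x)(1-xq)\cdots(1-xq^{N-1})$ (with $(x;q)_0=1$). The identity is one of rational functions in $q$. *)

theory Defs
  imports Complex_Main
begin

definition qpoch :: "'a::comm_ring_1 \<Rightarrow> 'a \<Rightarrow> nat \<Rightarrow> 'a" where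
  "qpoch x q N = (\<Prod>i<N. 1 - x * q ^ i)"

end

theory Submission
  imports Defs
begin

text \<open>
  Write \<open>S(a,b)\<close> for the sum \<open>\<Sum>k=1..a. (-1)^k q^(k choose 2) q^k / ((1-q^k) (q;q)_(a-k) (q;q)_(b+k))\<close>,
  so that the left-hand side is \<open>S(n,m) - S(m,n)\<close>. Splitting \<open>q^k/(1-q^k)\<close> by partial fractions
  gives a first-order recurrence for \<open>S\<close> in each argument, with error terms \<open>P\<close> and \<open>R\<close>, the
  sums with \<open>q^k/(1-q^k)\<close> replaced by \<open>1\<close> and by \<open>q^k\<close>. The terminating q-binomial theorem,
  evaluated at its root \<open>x = q^(-n)\<close>, gives \<open>R(n,m+1) + P(m+1,n) = -1/((q;q)_n (q;q)_(m+1))\<close>.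
  Hence \<open>S(n,m) - S(m,n)\<close> obeys in \<open>m\<close> the same recurrence as the right-hand side, and induction
  on \<open>m\<close>, started by antisymmetry, concludes.
\<close>

lemma qpoch_0 [simp]: "qpoch x q 0 = 1"
  by (simp add: qpoch_def)

lemma qpoch_Suc: "qpoch x q (Suc N) = qpoch x q N * (1 - x * q ^ N)"
  by (simp add: qpoch_def)

lemma qpoch_self_Suc: "qpoch q q (Suc N) = qpoch q q N * (1 - q ^ Suc N)"
  by (simp add: qpoch_Suc)

lemma qpoch_self_mult_shift: "qpoch q q a * qpoch (q ^ Suc a) q b = qpoch q q (a + b)"
  by (induction b) (simp_all add: qpoch_Suc power_add mult.assoc[symmetric])

lemma qpoch_self_eq_0_iff:
  fixes q :: "'a::field"
  shows "qpoch q q N = 0 \<longleftrightarrow> (\<exists>k\<in>{1..N}. q ^ k = 1)"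
proof -
  have "qpoch q q N = 0 \<longleftrightarrow> (\<exists>i<N. q ^ Suc i = 1)"
    by (auto simp: qpoch_def)
  also have "\<dots> \<longleftrightarrow> (\<exists>k\<in>{1..N}. q ^ k = 1)"
  proof
    assume "\<exists>i<N. q ^ Suc i = 1"
    then obtain i where "i < N" "q ^ Suc i = 1" by blast
    then show "\<exists>k\<in>{1..N}. q ^ k = 1" by (intro bexI[of _ "Suc i"]) auto
  next
    assume "\<exists>k\<in>{1..N}. q ^ k = 1"
    then obtain k where "1 \<le> k" "k \<le> N" "q ^ k = 1" by auto
    then show "\<exists>i<N. q ^ Suc i = 1" by (intro exI[of _ "k - 1"]) auto
  qed
  finally show ?thesis .
qed

lemma qpoch_self_nonzero_mono:
  fixes q :: "'a::field"
  shows "qpoch q q N \<noteq> 0 \<Longrightarrow> j \<le> N \<Longrightarrow> qpoch q q j \<noteq> 0"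
  by (auto simp: qpoch_self_eq_0_iff)

lemma power_neq_1_if_qpoch_self_nonzero:
  fixes q :: "'a::field"
  shows "qpoch q q N \<noteq> 0 \<Longrightarrow> 1 \<le> k \<Longrightarrow> k \<le> N \<Longrightarrow> q ^ k \<noteq> 1"
  by (auto simp: qpoch_self_eq_0_iff)

lemma choose_two_Suc: "Suc k choose 2 = (k choose 2) + k"
  by (simp add: numeral_2_eq_2)

lemma choose_two_add: "(a + b) choose 2 = (a choose 2) + (b choose 2) + a * b"
  by (induction b) (simp_all add: choose_two_Suc)

lemma choose_two_Suc_add_self: "(Suc a choose 2) + (a choose 2) = a * a"
  by (induction a) (simp_all add: choose_two_Suc)

lemma power_choose_two_cancel:
  fixes q x :: "'a::comm_ring_1"
  assumes "q ^ n * x = 1" "e + (j choose 2) = n * j + d"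
  shows "q ^ e * q ^ (j choose 2) * x ^ j = q ^ d"
proof -
  have "q ^ e * q ^ (j choose 2) * x ^ j = q ^ (n * j + d) * x ^ j"
    by (simp only: power_add[symmetric] assms(2))
  also have "\<dots> = (q ^ n * x) ^ j * q ^ d"
    unfolding power_add power_mult power_mult_distrib by (simp only: ac_simps)
  finally show ?thesis
    using assms(1) by simp
qed

lemma rescaled_binomial_term_reflect:
  fixes q x :: "'a::comm_ring_1"
  assumes "q ^ n * x = 1" "k \<le> n"
  shows "(-1) ^ n * (-1) ^ (n - k) * (q ^ (Suc n choose 2) * q ^ ((n - k) choose 2) * x ^ (n - k))
    = (-1) ^ k * q ^ ((k choose 2) + k)"
proof -
  define j where "j = n - k"
  have n_eq: "n = j + k" using assms(2) by (simp add: j_def)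
  have "q ^ (Suc n choose 2) * q ^ (j choose 2) * x ^ j = q ^ ((k choose 2) + k)"
    using choose_two_Suc_add_self[of j] by (intro power_choose_two_cancel[OF assms(1)])
      (simp add: n_eq choose_two_add choose_two_Suc algebra_simps)
  moreover have "(-1) ^ n * (-1) ^ j = ((-1) ^ k :: 'a)"
    by (simp add: n_eq power_add mult.commute)
  ultimately show ?thesis
    by (simp add: j_def)
qed

lemma rescaled_binomial_term_shift:
  fixes q x :: "'a::comm_ring_1"
  assumes "q ^ n * x = 1"
  shows "(-1) ^ n * (-1) ^ (n + k) * (q ^ (Suc n choose 2) * q ^ ((n + k) choose 2) * x ^ (n + k))
    = (-1) ^ k * q ^ (k choose 2)"
proof -
  have "q ^ (Suc n choose 2) * q ^ ((n + k) choose 2) * x ^ (n + k) = q ^ (k choose 2)"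
    using choose_two_Suc_add_self[of n] by (intro power_choose_two_cancel[OF assms])
      (simp add: choose_two_add choose_two_Suc algebra_simps)
  moreover have "(-1) ^ n * (-1) ^ (n + k) = ((-1) ^ k :: 'a)"
    by (simp add: power_add)
  ultimately show ?thesis
    by simp
qed

text \<open>Zero for \<open>j > N\<close>, so that the q-Pascal rule holds for every \<open>j\<close>.\<close>
definition qbinom :: "'a::field \<Rightarrow> nat \<Rightarrow> nat \<Rightarrow> 'a" where
  "qbinom q N j = (if j \<le> N then qpoch q q N / (qpoch q q j * qpoch q q (N - j)) else 0)"

lemma qbinom_0_right: "qpoch q q N \<noteq> 0 \<Longrightarrow> qbinom q N 0 = 1"
  by (simp add: qbinom_def)

lemma qbinom_eq_0: "N < j \<Longrightarrow> qbinom q N j = 0"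
  by (simp add: qbinom_def)

lemma qbinom_Suc_Suc:
  fixes q :: "'a::field"
  assumes nz: "qpoch q q (Suc N) \<noteq> 0"
  shows "qbinom q (Suc N) (Suc j) = qbinom q N (Suc j) + q ^ (N - j) * qbinom q N j"
proof -
  consider "N < j" | "j = N" | r where "N = j + Suc r"
  proof (cases "j < N")
    case True
    then obtain r where "N = Suc (j + r)" using less_imp_Suc_add by blast
    then show ?thesis using that(3) by simp
  qed (use that(1,2) in linarith)
  then show ?thesis
  proof cases
    case 1
    then show ?thesis by (simp add: qbinom_def)
  next
    case 2
    have "qpoch q q N \<noteq> 0" using qpoch_self_nonzero_mono[OF nz] by simp
    with nz 2 show ?thesis by (simp add: qbinom_def)
  next
    case 3
    define u v where "u = q ^ Suc j" and "v = q ^ Suc r"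
    have A: "qpoch q q j \<noteq> 0" and B: "qpoch q q r \<noteq> 0"
      using 3 qpoch_self_nonzero_mono[OF nz] by simp_all
    have u: "1 - u \<noteq> 0" and v: "1 - v \<noteq> 0"
      unfolding u_def v_def using 3 power_neq_1_if_qpoch_self_nonzero[OF nz, of "Suc j"]
        power_neq_1_if_qpoch_self_nonzero[OF nz, of "Suc r"] by auto
    have "q ^ Suc N = u * v"
      using 3 by (simp add: u_def v_def flip: power_add)
    then have QN: "qpoch q q (Suc N) = qpoch q q N * (1 - u * v)"
      by (simp only: qpoch_self_Suc)
    have QJ: "qpoch q q (Suc j) = qpoch q q j * (1 - u)"
      and QR: "qpoch q q (Suc r) = qpoch q q r * (1 - v)"
      by (simp_all only: qpoch_self_Suc u_def v_def)
    have idx: "j < N" "N - j = Suc r" "N - Suc j = r"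
      using 3 by simp_all
    have "qbinom q (Suc N) (Suc j) = qpoch q q N * (1 - u * v) / (qpoch q q j * (1 - u) * (qpoch q q r * (1 - v)))"
      unfolding qbinom_def QN QJ using idx by (simp add: QR)
    also have "\<dots> = qpoch q q N / (qpoch q q j * (1 - u) * qpoch q q r)
        + v * (qpoch q q N / (qpoch q q j * (qpoch q q r * (1 - v))))"
      using A B u v by (simp add: divide_simps) (simp add: algebra_simps)
    also have "\<dots> = qbinom q N (Suc j) + q ^ (N - j) * qbinom q N j"
      unfolding qbinom_def QJ using idx by (simp add: QR v_def)
    finally show ?thesis .
  qed
qed

theorem q_binomial:
  fixes q x :: "'a::field"
  assumes "qpoch q q N \<noteq> 0"
  shows "(\<Sum>j\<le>N. qbinom q N j * ((-1) ^ j * q ^ (j choose 2) * x ^ j)) = qpoch x q N"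
  using assms
proof (induction N)
  case 0
  then show ?case by (simp add: qbinom_def numeral_2_eq_2)
next
  case (Suc N)
  define t where "t j = (-1) ^ j * q ^ (j choose 2) * x ^ j" for j :: nat
  have t_Suc: "t (Suc j) = - x * q ^ j * t j" for j
    by (simp add: t_def choose_two_Suc power_add)
  have nz: "qpoch q q N \<noteq> 0"
    using qpoch_self_nonzero_mono[OF Suc.prems] by simp
  have IH: "(\<Sum>j\<le>N. qbinom q N j * t j) = qpoch x q N"
    using Suc.IH[OF nz] by (simp add: t_def)
  have "(\<Sum>j\<le>N. qbinom q N (Suc j) * t (Suc j)) = (\<Sum>j\<le>Suc N. qbinom q N j * t j) - t 0"
    by (subst sum.atMost_Suc_shift) (simp add: qbinom_0_right[OF nz])
  also have "\<dots> = qpoch x q N - t 0"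
    by (simp add: IH qbinom_eq_0)
  finally have shifted: "(\<Sum>j\<le>N. qbinom q N (Suc j) * t (Suc j)) = qpoch x q N - t 0" .
  have "(\<Sum>j\<le>N. q ^ (N - j) * qbinom q N j * t (Suc j)) = (\<Sum>j\<le>N. - x * q ^ N * (qbinom q N j * t j))"
  proof (rule sum.cong[OF refl])
    fix j assume "j \<in> {..N}"
    then have "q ^ (N - j) * q ^ j = q ^ N" by (simp flip: power_add)
    then show "q ^ (N - j) * qbinom q N j * t (Suc j) = - x * q ^ N * (qbinom q N j * t j)"
      by (simp add: t_Suc algebra_simps)
  qed
  also have "\<dots> = - x * q ^ N * qpoch x q N"
    by (simp only: IH flip: sum_distrib_left)
  finally have lowered: "(\<Sum>j\<le>N. q ^ (N - j) * qbinom q N j * t (Suc j)) = - x * q ^ N * qpoch x q N" .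
  have "(\<Sum>j\<le>Suc N. qbinom q (Suc N) j * t j)
      = t 0 + (\<Sum>j\<le>N. qbinom q N (Suc j) * t (Suc j)) + (\<Sum>j\<le>N. q ^ (N - j) * qbinom q N j * t (Suc j))"
    by (subst sum.atMost_Suc_shift)
      (simp add: qbinom_0_right[OF Suc.prems] qbinom_Suc_Suc[OF Suc.prems] distrib_right sum.distrib)
  also have "\<dots> = qpoch x q (Suc N)"
    unfolding shifted lowered by (simp add: qpoch_Suc algebra_simps)
  finally show ?case by (simp add: t_def)
qed

lemma q_binomial_root:
  fixes q x :: "'a::field"
  assumes nz: "qpoch q q N \<noteq> 0" and root: "q ^ n * x = 1" and "n < N"
  shows "(\<Sum>j\<le>N. (-1) ^ j * q ^ (j choose 2) * x ^ j / (qpoch q q j * qpoch q q (N - j))) = 0"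
proof -
  have "qpoch x q N = 0"
    unfolding qpoch_def using root \<open>n < N\<close> by (intro prod_zero bexI[of _ n]) (simp_all add: mult.commute)
  moreover have "(\<Sum>j\<le>N. qbinom q N j * ((-1) ^ j * q ^ (j choose 2) * x ^ j))
      = qpoch q q N * (\<Sum>j\<le>N. (-1) ^ j * q ^ (j choose 2) * x ^ j / (qpoch q q j * qpoch q q (N - j)))"
    by (simp add: qbinom_def sum_distrib_left)
  ultimately show ?thesis
    using q_binomial[OF nz, of x] nz by simp
qed

definition alt_term :: "'a::field \<Rightarrow> nat \<Rightarrow> nat \<Rightarrow> nat \<Rightarrow> 'a" where
  "alt_term q a b k = (-1) ^ k * q ^ (k choose 2) / (qpoch q q (a - k) * qpoch q q (b + k))"

text \<open>Since \<open>(q;q)_k (q^k;q)_(b+1) = (1-q^k) (q;q)_(b+k)\<close>, \<open>qsum q n m\<close> is the first sum of the theorem.\<close>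
definition qsum :: "'a::field \<Rightarrow> nat \<Rightarrow> nat \<Rightarrow> 'a" where
  "qsum q a b = (\<Sum>k=1..a. alt_term q a b k * (q ^ k / (1 - q ^ k)))"

definition lambert_sum :: "'a::field \<Rightarrow> nat \<Rightarrow> 'a" where
  "lambert_sum q n = (\<Sum>k=1..n. q ^ k / (1 - q ^ k))"

lemma qsum_0_left [simp]: "qsum q 0 b = 0"
  by (simp add: qsum_def)

lemma lambert_sum_0 [simp]: "lambert_sum q 0 = 0"
  by (simp add: lambert_sum_def)

lemma lambert_sum_Suc: "lambert_sum q (Suc n) = lambert_sum q n + q ^ Suc n / (1 - q ^ Suc n)"
  by (simp add: lambert_sum_def)

lemma alt_term_Suc_left:
  fixes q :: "'a::field"
  assumes "k \<le> a" "q ^ Suc (a - k) \<noteq> 1"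
  shows "alt_term q (Suc a) b k * (1 - q ^ Suc (a - k)) = alt_term q a b k"
proof -
  have "Suc a - k = Suc (a - k)" using assms(1) by simp
  moreover have "1 - q ^ Suc (a - k) \<noteq> 0" using assms(2) by simp
  ultimately show ?thesis by (simp add: alt_term_def qpoch_self_Suc)
qed

lemma alt_term_Suc_right:
  fixes q :: "'a::field"
  assumes "q ^ Suc (b + k) \<noteq> 1"
  shows "alt_term q a (Suc b) k * (1 - q ^ Suc (b + k)) = alt_term q a b k"
proof -
  have "1 - q ^ Suc (b + k) \<noteq> 0" using assms by simp
  then show ?thesis by (simp add: alt_term_def qpoch_self_Suc)
qed

lemma qsum_Suc_left:
  fixes q :: "'a::field"
  assumes nz: "qpoch q q (Suc a) \<noteq> 0"
  shows "(1 - q ^ Suc a) * qsum q (Suc a) b - q ^ Suc a * (\<Sum>k=1..Suc a. alt_term q (Suc a) b k)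
    = qsum q a b"
proof -
  let ?T = "alt_term q (Suc a) b"
  have summand: "(1 - q ^ Suc a) * (?T k * (q ^ k / (1 - q ^ k))) - q ^ Suc a * ?T k
      = (if k \<le> a then alt_term q a b k * (q ^ k / (1 - q ^ k)) else 0)"
    if k: "k \<in> {1..Suc a}" for k
  proof -
    define u v where "u = q ^ k" and "v = q ^ Suc (a - k)"
    have u: "1 - u \<noteq> 0"
      using k power_neq_1_if_qpoch_self_nonzero[OF nz, of k] by (simp add: u_def)
    show ?thesis
    proof (cases "k \<le> a")
      case True
      have v: "v \<noteq> 1"
        using True power_neq_1_if_qpoch_self_nonzero[OF nz, of "Suc (a - k)"] by (simp add: v_def)
      have uv: "q ^ Suc a = u * v"
        using True by (simp add: u_def v_def flip: power_add)
      have "(1 - q ^ Suc a) * (?T k * (u / (1 - u))) - q ^ Suc a * ?T k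
          = ?T k * (1 - v) * (u / (1 - u))"
        unfolding uv using u by (simp add: divide_simps) (simp add: algebra_simps)
      then show ?thesis
        using True alt_term_Suc_left[OF True v[unfolded v_def]] by (simp add: u_def v_def)
    next
      case False
      then have "k = Suc a" using k by simp
      with u show ?thesis by (simp add: u_def)
    qed
  qed
  have "(1 - q ^ Suc a) * qsum q (Suc a) b - q ^ Suc a * (\<Sum>k=1..Suc a. ?T k)
      = (\<Sum>k=1..Suc a. (1 - q ^ Suc a) * (?T k * (q ^ k / (1 - q ^ k))) - q ^ Suc a * ?T k)"
    by (simp only: qsum_def sum_distrib_left sum_subtractf)
  also have "\<dots> = (\<Sum>k=1..Suc a. if k \<le> a then alt_term q a b k * (q ^ k / (1 - q ^ k)) else 0)"
    by (rule sum.cong[OF refl]) (fact summand)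
  also have "\<dots> = qsum q a b"
    by (simp add: qsum_def)
  finally show ?thesis .
qed

lemma qsum_Suc_right:
  fixes q :: "'a::field"
  assumes nz: "qpoch q q (a + Suc b) \<noteq> 0"
  shows "(1 - q ^ Suc b) * qsum q a (Suc b) + q ^ Suc b * (\<Sum>k=1..a. alt_term q a (Suc b) k * q ^ k)
    = qsum q a b"
proof -
  let ?T = "alt_term q a (Suc b)"
  have summand: "(1 - q ^ Suc b) * (?T k * (q ^ k / (1 - q ^ k))) + q ^ Suc b * (?T k * q ^ k)
      = alt_term q a b k * (q ^ k / (1 - q ^ k))"
    if k: "k \<in> {1..a}" for k
  proof -
    define u s where "u = q ^ k" and "s = q ^ Suc b"
    have u: "1 - u \<noteq> 0"
      using k power_neq_1_if_qpoch_self_nonzero[OF nz, of k] by (simp add: u_def)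
    have su: "s * u = q ^ Suc (b + k)"
      by (simp add: u_def s_def power_add)
    have su1: "q ^ Suc (b + k) \<noteq> 1"
      using k power_neq_1_if_qpoch_self_nonzero[OF nz, of "Suc (b + k)"] by simp
    have "(1 - s) * (?T k * (u / (1 - u))) + s * (?T k * u) = ?T k * (1 - s * u) * (u / (1 - u))"
      using u by (simp add: divide_simps) (simp add: algebra_simps)
    also have "\<dots> = alt_term q a b k * (u / (1 - u))"
      using alt_term_Suc_right[OF su1] by (simp only: su)
    finally show ?thesis by (simp only: u_def s_def)
  qed
  have "(1 - q ^ Suc b) * qsum q a (Suc b) + q ^ Suc b * (\<Sum>k=1..a. ?T k * q ^ k)
      = (\<Sum>k=1..a. (1 - q ^ Suc b) * (?T k * (q ^ k / (1 - q ^ k))) + q ^ Suc b * (?T k * q ^ k))"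
    by (simp only: qsum_def sum_distrib_left sum.distrib)
  also have "\<dots> = qsum q a b"
    unfolding qsum_def by (rule sum.cong[OF refl]) (fact summand)
  finally show ?thesis .
qed

lemma alt_term_sums_complement:
  fixes q :: "'a::field"
  assumes nz: "qpoch q q (n + Suc m) \<noteq> 0"
  shows "(\<Sum>k=1..n. alt_term q n (Suc m) k * q ^ k) + (\<Sum>k=1..Suc m. alt_term q (Suc m) n k)
    = - 1 / (qpoch q q n * qpoch q q (Suc m))"
proof (cases "q = 0")
  case True
  \<comment> \<open>Every q-Pochhammer symbol is 1 and only the term \<open>k = 1\<close> of the second sum survives.\<close>
  then have alt: "alt_term q a b k = (-1) ^ k * 0 ^ (k choose 2)" for a b k
    by (simp add: alt_term_def qpoch_def)
  have "(\<Sum>k=1..n. alt_term q n (Suc m) k * q ^ k) = 0"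
    using True by (intro sum.neutral) auto
  moreover have "(\<Sum>k=1..Suc m. alt_term q (Suc m) n k) = -1"
  proof -
    have tail: "(\<Sum>k=Suc 1..Suc m. alt_term q (Suc m) n k) = 0"
      by (rule sum.neutral) (auto simp: alt)
    have "(\<Sum>k=1..Suc m. alt_term q (Suc m) n k)
        = alt_term q (Suc m) n 1 + (\<Sum>k=Suc 1..Suc m. alt_term q (Suc m) n k)"
      by (rule sum.atLeast_Suc_atMost) simp
    then show ?thesis
      unfolding tail by (simp add: alt numeral_2_eq_2)
  qed
  ultimately show ?thesis
    using True by (simp add: qpoch_def)
next
  case False
  define N where "N = n + Suc m"
  define x where "x = inverse (q ^ n)"
  \<comment> \<open>The q-binomial sum at \<open>x = q^(-n)\<close>, rescaled so that its terms \<open>j = n - k\<close> and \<open>j = n + k\<close>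
    are the summands of the two sums.\<close>
  define g where "g j = (-1) ^ n * (-1) ^ j * (q ^ (Suc n choose 2) * q ^ (j choose 2) * x ^ j)
    / (qpoch q q j * qpoch q q (N - j))" for j
  have qx: "q ^ n * x = 1"
    using False by (simp add: x_def)
  have "(\<Sum>j\<le>N. g j) = (-1) ^ n * q ^ (Suc n choose 2)
      * (\<Sum>j\<le>N. (-1) ^ j * q ^ (j choose 2) * x ^ j / (qpoch q q j * qpoch q q (N - j)))"
    by (simp add: g_def sum_distrib_left mult_ac)
  also have "\<dots> = 0"
    using q_binomial_root[of q N n x] nz qx by (simp add: N_def)
  finally have sum_g: "(\<Sum>j\<le>N. g j) = 0" .
  have low: "g (n - k) = alt_term q n (Suc m) k * q ^ k" if "k \<le> n" for k
  proof -
    have "N - (n - k) = Suc m + k" using that by (simp add: N_def)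
    then show ?thesis
      unfolding g_def rescaled_binomial_term_reflect[OF qx that] by (simp add: alt_term_def power_add)
  qed
  have high: "g (n + k) = alt_term q (Suc m) n k" if "k \<le> Suc m" for k
  proof -
    have "N - (n + k) = Suc m - k" by (simp add: N_def)
    then show ?thesis
      unfolding g_def rescaled_binomial_term_shift[OF qx] by (simp add: alt_term_def)
  qed
  have split: "(\<Sum>j\<le>n + p. g j) = (\<Sum>j\<le>n. g j) + (\<Sum>k=1..p. g (n + k))" for p
    by (induction p) simp_all
  have "0 = (\<Sum>j\<le>n. g j) + (\<Sum>k=1..Suc m. g (n + k))"
    using sum_g split[of "Suc m"] by (simp add: N_def)
  also have "(\<Sum>j\<le>n. g j) = (\<Sum>k\<le>n. g (n - k))"
    using sum.atLeastAtMost_rev[of g 0 n] by (simp add: atLeast0AtMost)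
  also have "\<dots> = (\<Sum>k=0..n. alt_term q n (Suc m) k * q ^ k)"
    using low by (simp add: atLeast0AtMost)
  also have "\<dots> = 1 / (qpoch q q n * qpoch q q (Suc m)) + (\<Sum>k=1..n. alt_term q n (Suc m) k * q ^ k)"
    by (simp add: sum.atLeast_Suc_atMost alt_term_def numeral_2_eq_2)
  also have "(\<Sum>k=1..Suc m. g (n + k)) = (\<Sum>k=1..Suc m. alt_term q (Suc m) n k)"
    using high by simp
  finally show ?thesis
    by (simp add: algebra_simps eq_neg_iff_add_eq_0)
qed

lemma qsum_antisym_Suc:
  fixes q :: "'a::field"
  assumes nz: "qpoch q q (Suc m + n) \<noteq> 0"
    and IH: "qsum q n m - qsum q m n
      = (lambert_sum q m - lambert_sum q n) / (qpoch q q m * qpoch q q n)"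
  shows "qsum q n (Suc m) - qsum q (Suc m) n
    = (lambert_sum q (Suc m) - lambert_sum q n) / (qpoch q q (Suc m) * qpoch q q n)"
proof -
  define u where "u = q ^ Suc m"
  have nz': "qpoch q q (n + Suc m) \<noteq> 0"
    using nz by (simp add: add.commute)
  have u: "1 - u \<noteq> 0"
    using power_neq_1_if_qpoch_self_nonzero[OF nz, of "Suc m"] by (simp add: u_def)
  have A: "qpoch q q m \<noteq> 0" and B: "qpoch q q n \<noteq> 0" and S: "qpoch q q (Suc m) \<noteq> 0"
    using qpoch_self_nonzero_mono[OF nz] by simp_all
  have "(1 - u) * (qsum q n (Suc m) - qsum q (Suc m) n)
      = (qsum q n m - qsum q m n)
        - u * ((\<Sum>k=1..n. alt_term q n (Suc m) k * q ^ k) + (\<Sum>k=1..Suc m. alt_term q (Suc m) n k))"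
    unfolding qsum_Suc_left[OF S, of n, symmetric] qsum_Suc_right[OF nz', symmetric] u_def
    by algebra
  also have "\<dots> = (lambert_sum q m - lambert_sum q n) / (qpoch q q m * qpoch q q n)
      + u / (qpoch q q n * (qpoch q q m * (1 - u)))"
    unfolding IH alt_term_sums_complement[OF nz'] by (simp add: qpoch_self_Suc u_def)
  finally have "qsum q n (Suc m) - qsum q (Suc m) n
      = ((lambert_sum q m - lambert_sum q n) / (qpoch q q m * qpoch q q n)
        + u / (qpoch q q n * (qpoch q q m * (1 - u)))) / (1 - u)"
    using u by (simp add: field_simps)
  also have "\<dots> = (lambert_sum q m + u / (1 - u) - lambert_sum q n) / (qpoch q q m * (1 - u) * qpoch q q n)"
    using u A B by (simp add: divide_simps) (simp add: algebra_simps)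
  finally show ?thesis
    by (simp add: lambert_sum_Suc qpoch_self_Suc u_def)
qed

lemma qsum_antisym:
  fixes q :: "'a::field"
  assumes "qpoch q q (m + n) \<noteq> 0"
  shows "qsum q n m - qsum q m n
    = (lambert_sum q m - lambert_sum q n) / (qpoch q q m * qpoch q q n)"
proof -
  have from_0: "qsum q j i - qsum q i j
      = (lambert_sum q i - lambert_sum q j) / (qpoch q q i * qpoch q q j)"
    if "qpoch q q (i + j) \<noteq> 0" "qsum q j 0 = - (lambert_sum q j / qpoch q q j)" for i j
    using that(1)
  proof (induction i)
    case 0
    then show ?case using that(2) by simp
  next
    case (Suc i)
    have "qpoch q q (i + j) \<noteq> 0"
      using qpoch_self_nonzero_mono[OF Suc.prems] by simp
    then show ?case
      by (rule qsum_antisym_Suc[OF Suc.prems Suc.IH])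
  qed
  \<comment> \<open>Both sides are antisymmetric in \<open>(m, n)\<close>, so the base case follows from the case \<open>(n, 0)\<close>.\<close>
  have "- qsum q n 0 = lambert_sum q n / qpoch q q n"
    using from_0[of n 0] qpoch_self_nonzero_mono[OF assms, of n] by simp
  then have "qsum q n 0 = - (lambert_sum q n / qpoch q q n)"
    by (metis minus_minus)
  then show ?thesis
    by (rule from_0[OF assms])
qed

lemma corollary_summand_eq_alt_term:
  fixes q :: "'a::field"
  assumes "1 \<le> k"
  shows "(-1) ^ k * q ^ (Suc k choose 2) / (qpoch q q k * qpoch q q (n - k) * qpoch (q ^ k) q (m + 1))
    = alt_term q n m k * (q ^ k / (1 - q ^ k))"
proof -
  obtain i where k: "k = Suc i" using assms by (cases k) auto
  have "qpoch q q k * qpoch (q ^ k) q (m + 1) = (1 - q ^ k) * (qpoch q q i * qpoch (q ^ Suc i) q (m + 1))"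
    by (simp only: k qpoch_self_Suc mult_ac)
  also have "\<dots> = (1 - q ^ k) * qpoch q q (m + k)"
    by (simp only: qpoch_self_mult_shift) (simp add: k add.commute)
  finally have shift: "qpoch q q k * qpoch (q ^ k) q (m + 1) = (1 - q ^ k) * qpoch q q (m + k)" .
  have "qpoch q q k * qpoch q q (n - k) * qpoch (q ^ k) q (m + 1)
      = qpoch q q (n - k) * (qpoch q q k * qpoch (q ^ k) q (m + 1))"
    by (simp only: ac_simps)
  also have "\<dots> = (1 - q ^ k) * qpoch q q (n - k) * qpoch q q (m + k)"
    by (simp only: shift) (simp only: ac_simps)
  finally show ?thesis
    by (simp add: alt_term_def choose_two_Suc power_add mult_ac)
qed

theorem corollary6p3:
  fixes q :: "'a::field_char_0" and m n :: nat
  assumes "\<And>k. 1 \<le> k \<Longrightarrow> k \<le> m + n \<Longrightarrow> q ^ k \<noteq> 1"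
  shows "(\<Sum>k=1..n. (-1) ^ k * q ^ (Suc k choose 2) /
            (qpoch q q k * qpoch q q (n - k) * qpoch (q ^ k) q (m + 1)))
       - (\<Sum>k=1..m. (-1) ^ k * q ^ (Suc k choose 2) /
            (qpoch q q k * qpoch q q (m - k) * qpoch (q ^ k) q (n + 1)))
       = 1 / (qpoch q q m * qpoch q q n) *
         ((\<Sum>k=1..m. q ^ k / (1 - q ^ k)) - (\<Sum>k=1..n. q ^ k / (1 - q ^ k)))"
proof -
  have qsum_eq: "(\<Sum>k=1..a. (-1) ^ k * q ^ (Suc k choose 2) /
      (qpoch q q k * qpoch q q (a - k) * qpoch (q ^ k) q (b + 1))) = qsum q a b" for a b
    unfolding qsum_def by (intro sum.cong refl corollary_summand_eq_alt_term) simp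
  have "qpoch q q (m + n) \<noteq> 0"
    using assms by (auto simp: qpoch_self_eq_0_iff)
  then have "qsum q n m - qsum q m n
      = (lambert_sum q m - lambert_sum q n) / (qpoch q q m * qpoch q q n)"
    by (rule qsum_antisym)
  then show ?thesis
    unfolding qsum_eq by (simp add: lambert_sum_def)
qed

end
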